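(* Let $\mathcal{X}\in\mathbb{R}^{n_1\times\cdots\times n_D}$, and for each $d\in\{1,\dots,D\}$ let $\{w_{d,ij}\}_{1\le i<j\le n_d}$ be nonnegative weights such that for any pair $i<j$ in $\{1,\dots,n_d\}$ there is a sequence of indices $i\to k\to\cdots\to l\to j$ along which the weights $w_{d,ik},\dots,w_{d,lj}$ are all positive. For $\gamma\ge0$ let $$F_\gamma(\mathcal{U})=\frac12\|\mathcal{X}-\mathcal{U}\|_F^2+\gamma\sum_{d=1}^D\sum_{1\le i<j\le n_d} w_{d,ij}\,\|\mathcal{U}\times_d\Delta_{d,ij}\|_F .$$ Then for all sufficiently large $\gamma$, $F_\gamma$ is minimized by the grand mean tensor $\overline{\mathcal{X}}$, the tensor all of whose entries equal the average of all $n=\prod_d n_d$ entries of $\mathcal{X}$.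
   Context: Weights are symmetric ($w_{d,ij}=w_{d,ji}$). $\|\cdot\|_F$ is the Frobenius norm. $\mathcal{U}\times_d B$ is the $d$-mode product: $(\mathcal{U}\times_d B)_{i_1\ldots j\ldots i_D}=\sum_{i_d}u_{i_1\ldots i_D}b_{j i_d}$. $\Delta_{d,ij}=e_i^\top-e_j^\top\in\mathbb{R}^{1\times n_d}$, with $e_i$ the standard basis vectors of $\mathbb{R}^{n_d}$; so $\mathcal{U}\times_d\Delta_{d,ij}$ is the difference of the $i$th and $j$th mode-$d$ subarrays of $\mathcal{U}$. *)

theory Defs
  imports Complex_Main "HOL-Library.FuncSet"
begin

text \<open>Tensors of order D with mode sizes n 0, ..., n (D-1) (0-based indices).
  A tensor is a real function on multi-indices; only its values on
  tensor_idx D n matter.\<close>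

definition tensor_idx :: "nat \<Rightarrow> (nat \<Rightarrow> nat) \<Rightarrow> (nat \<Rightarrow> nat) set" where
  "tensor_idx D n = PiE {..<D} (\<lambda>d. {..<n d})"

definition frob_sq :: "nat \<Rightarrow> (nat \<Rightarrow> nat) \<Rightarrow> ((nat \<Rightarrow> nat) \<Rightarrow> real) \<Rightarrow> real" where
  "frob_sq D n U = (\<Sum>idx\<in>tensor_idx D n. (U idx)\<^sup>2)"

text \<open>Frobenius norm of U \<times>_d \<Delta>_{d,ij}: the difference of the i-th and j-th
  mode-d subarrays, i.e. entries U(idx[d:=i]) - U(idx[d:=j]) over all
  multi-indices idx with idx d = i.\<close>
definition mode_diff_norm ::
  "nat \<Rightarrow> (nat \<Rightarrow> nat) \<Rightarrow> ((nat \<Rightarrow> nat) \<Rightarrow> real) \<Rightarrow> nat \<Rightarrow> nat \<Rightarrow> nat \<Rightarrow> real" where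
  "mode_diff_norm D n U d i j =
     sqrt (\<Sum>idx\<in>{idx\<in>tensor_idx D n. idx d = i}. (U idx - U (idx(d := j)))\<^sup>2)"

definition F_obj ::
  "nat \<Rightarrow> (nat \<Rightarrow> nat) \<Rightarrow> (nat \<Rightarrow> nat \<Rightarrow> nat \<Rightarrow> real) \<Rightarrow> ((nat \<Rightarrow> nat) \<Rightarrow> real)
     \<Rightarrow> real \<Rightarrow> ((nat \<Rightarrow> nat) \<Rightarrow> real) \<Rightarrow> real" where
  "F_obj D n w X \<gamma> U =
     frob_sq D n (\<lambda>idx. X idx - U idx) / 2
     + \<gamma> * (\<Sum>d<D. \<Sum>j<n d. \<Sum>i<j. w d i j * mode_diff_norm D n U d i j)"

definition grand_mean :: "nat \<Rightarrow> (nat \<Rightarrow> nat) \<Rightarrow> ((nat \<Rightarrow> nat) \<Rightarrow> real) \<Rightarrow> ((nat \<Rightarrow> nat) \<Rightarrow> real)" where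
  "grand_mean D n X = (\<lambda>_. (\<Sum>idx\<in>tensor_idx D n. X idx) / real (\<Prod>d<D. n d))"

definition pos_edges :: "(nat \<Rightarrow> nat) \<Rightarrow> (nat \<Rightarrow> nat \<Rightarrow> nat \<Rightarrow> real) \<Rightarrow> nat \<Rightarrow> (nat \<times> nat) set" where
  "pos_edges n w d = {(a, b). a < n d \<and> b < n d \<and> a \<noteq> b \<and> w d a b > 0}"

end

theory Submission
  imports Defs
begin

text \<open>The penalty bounds the oscillation of U: moving one coordinate along a positive-weight
  edge changes U by at most the penalty divided by the edge weight, and by connectivity of
  every mode any two multi-indices are joined by a chain of such moves. Hence
  \<open>\<bar>U a - U a\<^sub>0\<bar> \<le> K\<^sub>a P(U)\<close>. Expanding \<open>\<parallel>X - U\<parallel>\<^sup>2\<close> around the grand mean c, the entries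
  \<open>X a - c\<close> sum to zero, so the cross term only sees \<open>U a - U a\<^sub>0\<close> and is dominated by
  \<open>\<gamma> P(U)\<close> once \<gamma> exceeds \<open>\<Sum>\<^sub>a \<bar>X a - c\<bar> K\<^sub>a\<close>.\<close>

definition controlled_by :: "(('i \<Rightarrow> real) \<Rightarrow> real) \<Rightarrow> 'i \<Rightarrow> 'i \<Rightarrow> bool" where
  "controlled_by P a b \<longleftrightarrow> (\<exists>K\<ge>0. \<forall>U. \<bar>U a - U b\<bar> \<le> K * P U)"

lemma controlled_by_refl: "controlled_by P a a"
  unfolding controlled_by_def by (rule exI[of _ 0]) auto

lemma controlled_by_sym: "controlled_by P a b \<Longrightarrow> controlled_by P b a"
  unfolding controlled_by_def by (metis abs_minus_commute)

lemma controlled_by_trans: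
  assumes "controlled_by P a b" "controlled_by P b c"
  shows "controlled_by P a c"
proof -
  obtain K1 where K1: "K1 \<ge> 0" "\<And>U. \<bar>U a - U b\<bar> \<le> K1 * P U"
    using assms(1) unfolding controlled_by_def by blast
  obtain K2 where K2: "K2 \<ge> 0" "\<And>U. \<bar>U b - U c\<bar> \<le> K2 * P U"
    using assms(2) unfolding controlled_by_def by blast
  have "\<bar>U a - U c\<bar> \<le> (K1 + K2) * P U" for U
    using K1(2)[of U] K2(2)[of U] by (simp add: distrib_right)
  then show ?thesis
    unfolding controlled_by_def using K1(1) K2(1) by (intro exI[of _ "K1 + K2"]) auto
qed

lemma sum_sq_dev_mean_le:
  fixes X U :: "'i \<Rightarrow> real"
  assumes "finite T" "t0 \<in> T"
    and c: "c = sum X T / card T"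
    and K: "\<And>t. t \<in> T \<Longrightarrow> \<bar>U t - U t0\<bar> \<le> K t * p"
  shows "(\<Sum>t\<in>T. (X t - c)\<^sup>2) \<le> (\<Sum>t\<in>T. (X t - U t)\<^sup>2) + 2 * (\<Sum>t\<in>T. \<bar>X t - c\<bar> * K t) * p"
proof -
  define e where "e t = X t - c" for t
  have "card T > 0" using assms(1,2) card_gt_0_iff by blast
  then have sum_e: "sum e T = 0"
    unfolding e_def c by (simp add: sum_subtractf)
  have expand: "(X t - U t)\<^sup>2 = (e t)\<^sup>2 - 2 * (e t * (U t - U t0)) - 2 * (U t0 - c) * e t + (U t - c)\<^sup>2"
    for t unfolding e_def by (simp add: power2_eq_square algebra_simps)
  have "(\<Sum>t\<in>T. (e t)\<^sup>2 - 2 * (e t * (U t - U t0)) - 2 * (U t0 - c) * e t) \<le> (\<Sum>t\<in>T. (X t - U t)\<^sup>2)"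
    by (rule sum_mono) (simp add: expand)
  then have "(\<Sum>t\<in>T. (e t)\<^sup>2) \<le> (\<Sum>t\<in>T. (X t - U t)\<^sup>2) + 2 * (\<Sum>t\<in>T. e t * (U t - U t0))"
    using sum_e by (simp add: sum_subtractf sum_distrib_left[symmetric])
  also have "(\<Sum>t\<in>T. e t * (U t - U t0)) \<le> (\<Sum>t\<in>T. \<bar>e t\<bar> * K t * p)"
  proof (rule sum_mono)
    fix t assume "t \<in> T"
    have "e t * (U t - U t0) \<le> \<bar>e t\<bar> * \<bar>U t - U t0\<bar>" by (simp add: abs_mult[symmetric])
    also have "\<dots> \<le> \<bar>e t\<bar> * (K t * p)" using K[OF \<open>t \<in> T\<close>] by (simp add: mult_left_mono)
    finally show "e t * (U t - U t0) \<le> \<bar>e t\<bar> * K t * p" by simp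
  qed
  also have "(\<Sum>t\<in>T. \<bar>e t\<bar> * K t * p) = (\<Sum>t\<in>T. \<bar>e t\<bar> * K t) * p"
    by (simp add: sum_distrib_right)
  finally show ?thesis unfolding e_def by (simp add: mult.assoc)
qed

lemma finite_tensor_idx: "finite (tensor_idx D n)"
  unfolding tensor_idx_def by (rule finite_PiE) auto

lemma card_tensor_idx: "card (tensor_idx D n) = (\<Prod>d<D. n d)"
  unfolding tensor_idx_def by (simp add: card_PiE)

lemma tensor_idx_less: "a \<in> tensor_idx D n \<Longrightarrow> d < D \<Longrightarrow> a d < n d"
  unfolding tensor_idx_def by (auto simp: PiE_iff)

lemma tensor_idx_upd: "a \<in> tensor_idx D n \<Longrightarrow> d < D \<Longrightarrow> k < n d \<Longrightarrow> a(d := k) \<in> tensor_idx D n"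
  unfolding tensor_idx_def by (auto simp: PiE_iff extensional_def)

lemma tensor_idx_ext: "a \<in> tensor_idx D n \<Longrightarrow> b \<in> tensor_idx D n \<Longrightarrow> D \<le> d \<Longrightarrow> a d = b d"
  unfolding tensor_idx_def by (auto simp: PiE_iff extensional_def)

lemma mode_diff_norm_nonneg: "0 \<le> mode_diff_norm D n U d i j"
  unfolding mode_diff_norm_def by (auto intro: sum_nonneg)

lemma abs_diff_le_mode_diff_norm:
  assumes "a \<in> tensor_idx D n" "a d = i"
  shows "\<bar>U a - U (a(d := j))\<bar> \<le> mode_diff_norm D n U d i j"
proof -
  have "(U a - U (a(d := j)))\<^sup>2 \<le> (\<Sum>b\<in>{b\<in>tensor_idx D n. b d = i}. (U b - U (b(d := j)))\<^sup>2)"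
    by (rule member_le_sum[where f = "\<lambda>b. (U b - U (b(d := j)))\<^sup>2"])
       (use assms finite_tensor_idx in auto)
  then have "sqrt ((U a - U (a(d := j)))\<^sup>2) \<le> mode_diff_norm D n U d i j"
    unfolding mode_diff_norm_def by (rule real_sqrt_le_mono)
  then show ?thesis by simp
qed

definition fusion_penalty ::
  "nat \<Rightarrow> (nat \<Rightarrow> nat) \<Rightarrow> (nat \<Rightarrow> nat \<Rightarrow> nat \<Rightarrow> real) \<Rightarrow> ((nat \<Rightarrow> nat) \<Rightarrow> real) \<Rightarrow> real" where
  "fusion_penalty D n w U = (\<Sum>d<D. \<Sum>j<n d. \<Sum>i<j. w d i j * mode_diff_norm D n U d i j)"

lemma F_obj_eq: "F_obj D n w X \<gamma> U = frob_sq D n (\<lambda>a. X a - U a) / 2 + \<gamma> * fusion_penalty D n w U"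
  unfolding F_obj_def fusion_penalty_def ..

lemma fusion_penalty_const: "fusion_penalty D n w (\<lambda>_. c) = 0"
  unfolding fusion_penalty_def mode_diff_norm_def by simp

context
  fixes D :: nat and n :: "nat \<Rightarrow> nat" and w :: "nat \<Rightarrow> nat \<Rightarrow> nat \<Rightarrow> real"
  assumes nonneg: "\<forall>d<D. \<forall>j<n d. \<forall>i<j. 0 \<le> w d i j"
begin

lemma fusion_penalty_nonneg: "0 \<le> fusion_penalty D n w U"
  unfolding fusion_penalty_def using nonneg mode_diff_norm_nonneg
  by (intro sum_nonneg) (auto intro!: mult_nonneg_nonneg)

lemma weighted_mode_diff_le_fusion_penalty:
  assumes "d < D" "i < j" "j < n d"
  shows "w d i j * mode_diff_norm D n U d i j \<le> fusion_penalty D n w U"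
proof -
  let ?m = "mode_diff_norm D n U"
  have "w d i j * ?m d i j \<le> (\<Sum>i'<j. w d i' j * ?m d i' j)"
    by (rule member_le_sum[where f = "\<lambda>i'. w d i' j * ?m d i' j"])
       (use assms nonneg mode_diff_norm_nonneg in auto)
  also have "\<dots> \<le> (\<Sum>j'<n d. \<Sum>i'<j'. w d i' j' * ?m d i' j')"
    by (rule member_le_sum[where f = "\<lambda>j'. \<Sum>i'<j'. w d i' j' * ?m d i' j'"])
       (use assms nonneg mode_diff_norm_nonneg in \<open>auto intro!: sum_nonneg\<close>)
  also have "\<dots> \<le> fusion_penalty D n w U"
    unfolding fusion_penalty_def
    by (rule member_le_sum[where f = "\<lambda>d. \<Sum>j'<n d. \<Sum>i'<j'. w d i' j' * ?m d i' j'"])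
       (use assms nonneg mode_diff_norm_nonneg in \<open>auto intro!: sum_nonneg\<close>)
  finally show ?thesis .
qed

lemma controlled_mode_step:
  assumes "a \<in> tensor_idx D n" "d < D" "a d < j" "j < n d" "w d (a d) j > 0"
  shows "controlled_by (fusion_penalty D n w) a (a(d := j))"
proof -
  let ?w = "w d (a d) j"
  have "\<bar>U a - U (a(d := j))\<bar> \<le> 1 / ?w * fusion_penalty D n w U" for U
  proof -
    have "?w * \<bar>U a - U (a(d := j))\<bar> \<le> ?w * mode_diff_norm D n U d (a d) j"
      using abs_diff_le_mode_diff_norm[OF assms(1)] assms(5) by simp
    also have "\<dots> \<le> fusion_penalty D n w U"
      using weighted_mode_diff_le_fusion_penalty assms(2-4) .
    finally show ?thesis using assms(5) by (simp add: field_simps)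
  qed
  then show ?thesis
    unfolding controlled_by_def using assms(5) by (intro exI[of _ "1 / ?w"]) auto
qed

context
  assumes sym: "\<forall>d<D. \<forall>i<n d. \<forall>j<n d. w d i j = w d j i"
begin

lemma controlled_pos_edge:
  assumes a: "a \<in> tensor_idx D n" and d: "d < D" and e: "(a d, j) \<in> pos_edges n w d"
  shows "controlled_by (fusion_penalty D n w) a (a(d := j))"
proof -
  have j: "j < n d" and ad: "a d < n d" and "a d \<noteq> j" and wpos: "w d (a d) j > 0"
    using e unfolding pos_edges_def by auto
  then consider "a d < j" | "j < a d" by linarith
  then show ?thesis
  proof cases
    case 1
    then show ?thesis using controlled_mode_step a d j wpos by blast
  next
    case 2
    let ?b = "a(d := j)"
    have "w d j (a d) > 0" using sym d ad j wpos by metis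
    then have "controlled_by (fusion_penalty D n w) ?b (?b(d := a d))"
      using controlled_mode_step[OF tensor_idx_upd[OF a d j] d, where j = "a d"] 2 ad by simp
    then show ?thesis using controlled_by_sym by simp
  qed
qed

lemma controlled_pos_path:
  assumes d: "d < D"
  shows "(i, j) \<in> (pos_edges n w d)\<^sup>+ \<Longrightarrow> a \<in> tensor_idx D n \<Longrightarrow> a d = i
    \<Longrightarrow> controlled_by (fusion_penalty D n w) a (a(d := j))"
proof (induction rule: trancl_induct)
  case (base j)
  then show ?case using controlled_pos_edge d by blast
next
  case (step k j)
  have "k < n d" using step(2) unfolding pos_edges_def by auto
  then have "controlled_by (fusion_penalty D n w) (a(d := k)) ((a(d := k))(d := j))"
    using controlled_pos_edge[OF tensor_idx_upd[OF step(4) d] d] step(2) by simp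
  moreover have "controlled_by (fusion_penalty D n w) a (a(d := k))"
    using step(3-5) .
  ultimately show ?case using controlled_by_trans by fastforce
qed

context
  assumes connected: "\<forall>d<D. \<forall>j<n d. \<forall>i<j. (i, j) \<in> (pos_edges n w d)\<^sup>+"
begin

lemma controlled_mode_update:
  assumes a: "a \<in> tensor_idx D n" and d: "d < D" and k: "k < n d"
  shows "controlled_by (fusion_penalty D n w) a (a(d := k))"
proof -
  have ad: "a d < n d" using tensor_idx_less[OF a d] .
  consider "k = a d" | "a d < k" | "k < a d" by linarith
  then show ?thesis
  proof cases
    case 1
    then show ?thesis using controlled_by_refl by simp
  next
    case 2
    then show ?thesis using controlled_pos_path[OF d _ a] connected d k by blast
  next
    case 3
    have "controlled_by (fusion_penalty D n w) (a(d := k)) ((a(d := k))(d := a d))"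
      using controlled_pos_path[OF d _ tensor_idx_upd[OF a d k], where j = "a d"] connected d ad 3
      by simp
    then show ?thesis using controlled_by_sym by simp
  qed
qed

text \<open>Walk from a to b by replacing the coordinates of a by those of b one mode at a time.\<close>
lemma controlled_tensor_idx:
  assumes a: "a \<in> tensor_idx D n" and b: "b \<in> tensor_idx D n"
  shows "controlled_by (fusion_penalty D n w) a b"
proof -
  define g where "g m = (\<lambda>d. if d < m then b d else a d)" for m
  have "g m \<in> tensor_idx D n \<and> controlled_by (fusion_penalty D n w) a (g m)" for m
  proof (induction m)
    case 0
    then show ?case using a controlled_by_refl by (simp add: g_def)
  next
    case (Suc m)
    have g_Suc: "g (Suc m) = (g m)(m := b m)" by (auto simp: g_def)
    show ?case
    proof (cases "m < D")
      case True
      have bm: "b m < n m" using tensor_idx_less[OF b True] .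
      have "controlled_by (fusion_penalty D n w) (g m) (g (Suc m))"
        unfolding g_Suc using controlled_mode_update[OF _ True bm] Suc by blast
      moreover have "g (Suc m) \<in> tensor_idx D n"
        unfolding g_Suc using tensor_idx_upd[of "g m" D n m "b m"] True bm Suc by blast
      ultimately show ?thesis using controlled_by_trans[OF conjunct2[OF Suc]] by blast
    next
      case False
      have "b m = a m" using tensor_idx_ext[OF b a] False by simp
      then have "g (Suc m) = g m" unfolding g_Suc by (auto simp: g_def)
      then show ?thesis using Suc by simp
    qed
  qed
  moreover have "g D = b"
    unfolding g_def using tensor_idx_ext[OF a b] by fastforce
  ultimately show ?thesis by metis
qed

end

end

end

theorem proposition4p3:
  fixes D :: nat and n :: "nat \<Rightarrow> nat"
    and w :: "nat \<Rightarrow> nat \<Rightarrow> nat \<Rightarrow> real"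
    and X :: "(nat \<Rightarrow> nat) \<Rightarrow> real"
  assumes sizes: "\<forall>d<D. 1 \<le> n d"
    and sym: "\<forall>d<D. \<forall>i<n d. \<forall>j<n d. w d i j = w d j i"
    and nonneg: "\<forall>d<D. \<forall>j<n d. \<forall>i<j. 0 \<le> w d i j"
    and connected: "\<forall>d<D. \<forall>j<n d. \<forall>i<j. (i, j) \<in> (pos_edges n w d)\<^sup>+"
  shows "\<exists>\<gamma>0. \<forall>\<gamma>\<ge>\<gamma>0. \<forall>U.
           F_obj D n w X \<gamma> (grand_mean D n X) \<le> F_obj D n w X \<gamma> U"
proof -
  let ?T = "tensor_idx D n" and ?P = "fusion_penalty D n w"
  define a0 :: "nat \<Rightarrow> nat" where "a0 = (\<lambda>d. if d < D then 0 else undefined)"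
  have a0: "a0 \<in> ?T"
    unfolding tensor_idx_def a0_def using sizes by (auto simp: PiE_iff extensional_def)
  obtain K where K: "\<And>a U. a \<in> ?T \<Longrightarrow> \<bar>U a - U a0\<bar> \<le> K a * ?P U"
    using controlled_tensor_idx[OF nonneg sym connected _ a0]
    unfolding controlled_by_def by metis
  define c where "c = sum X ?T / card ?T"
  have mean: "grand_mean D n X = (\<lambda>_. c)"
    unfolding grand_mean_def c_def card_tensor_idx ..
  define \<gamma>0 where "\<gamma>0 = (\<Sum>a\<in>?T. \<bar>X a - c\<bar> * K a)"
  have "F_obj D n w X \<gamma> (\<lambda>_. c) \<le> F_obj D n w X \<gamma> U" if "\<gamma> \<ge> \<gamma>0" for \<gamma> U
  proof -
    have "(\<Sum>a\<in>?T. (X a - c)\<^sup>2) \<le> (\<Sum>a\<in>?T. (X a - U a)\<^sup>2) + 2 * \<gamma>0 * ?P U"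
      unfolding \<gamma>0_def by (rule sum_sq_dev_mean_le[OF finite_tensor_idx a0 c_def K])
    moreover have "\<gamma>0 * ?P U \<le> \<gamma> * ?P U"
      using that fusion_penalty_nonneg[OF nonneg] by (rule mult_right_mono)
    ultimately show ?thesis
      unfolding F_obj_eq fusion_penalty_const frob_sq_def by simp
  qed
  then show ?thesis unfolding mean by blast
qed

end
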